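(* Let $\Omega\subset\mathbb{R}^N$ be open, $w\in\mathrm{USC}(\Omega)$ and $x_0\in\Omega$. Then $w$ is $\tilde{\mathcal{Q}}$-subharmonic at $x_0$ if and only if $w(x_0)\le 0$ or $w$ is subaffine at $x_0$.
   Context: $\mathcal{S}(N)$: real symmetric $N\times N$ matrices; $\lambda_N(A)$ the largest eigenvalue. $\tilde{\mathcal{Q}}:=\{(r,A)\in\mathbb{R}\times\mathcal{S}(N): r\le 0\text{ or }\lambda_N(A)\ge 0\}$. $J^+_{x_0}w:=\{(\varphi(x_0),D^2\varphi(x_0)):\varphi$ is $C^2$ near $x_0$, $w\le\varphi$ near $x_0$, $w(x_0)=\varphi(x_0)\}$. $w$ is $\tilde{\mathcal Q}$-subharmonic at $x_0$ if $J^+_{x_0}w\subset\tilde{\mathcal{Q}}$. $w$ is subaffine at $x_0$ if there is no triple $(\varepsilon,\rho,a)$ with $\varepsilon,\rho>0$ and $a$ an affine function on $\mathbb{R}^N$ such that $(w-a)(x_0)=0$ and $(w-a)(x)\le-\varepsilon|x-x_0|^2$ for all $x\in B_\rho(x_0)$. *)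

theory Defs
  imports "HOL-Analysis.Analysis"
begin

text \<open>Upper semicontinuity on a set, for extended-real-valued functions
  (values in [-\<infinity>, +\<infinity>), the +\<infinity> exclusion is stated separately).\<close>
definition usc_on :: "'a::topological_space set \<Rightarrow> ('a \<Rightarrow> ereal) \<Rightarrow> bool" where
  "usc_on S w \<longleftrightarrow> (\<forall>x\<in>S. \<forall>c. w x < c \<longrightarrow> eventually (\<lambda>y. w y < c) (at x within S))"

definition symmetric_matrix :: "real^'n^'n \<Rightarrow> bool" where
  "symmetric_matrix A \<longleftrightarrow> transpose A = A"

definition largest_eigenvalue :: "real^'n^'n \<Rightarrow> real" where
  "largest_eigenvalue A = Max {c. \<exists>v. v \<noteq> 0 \<and> A *v v = c *\<^sub>R v}"

definition Qtilde :: "(real \<times> (real^'n^'n)) set" where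
  "Qtilde = {(r, A). symmetric_matrix A \<and> (r \<le> 0 \<or> largest_eigenvalue A \<ge> 0)}"

definition C2_on_ball_with ::
  "(real^'n \<Rightarrow> real) \<Rightarrow> (real^'n \<Rightarrow> real^'n) \<Rightarrow> (real^'n \<Rightarrow> real^'n^'n) \<Rightarrow> real^'n \<Rightarrow> real \<Rightarrow> bool" where
  "C2_on_ball_with phi Dphi D2phi x0 r \<longleftrightarrow>
     (\<forall>x\<in>ball x0 r. (phi has_derivative (\<lambda>h. Dphi x \<bullet> h)) (at x)
                   \<and> (Dphi has_derivative (\<lambda>h. D2phi x *v h)) (at x))
     \<and> continuous_on (ball x0 r) D2phi"

definition upper_jet :: "(real^'n) set \<Rightarrow> (real^'n \<Rightarrow> ereal) \<Rightarrow> real^'n \<Rightarrow> (real \<times> (real^'n^'n)) set" where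
  "upper_jet \<Omega> w x0 = {(phi x0, D2phi x0) | phi Dphi D2phi. \<exists>r>0. ball x0 r \<subseteq> \<Omega>
       \<and> C2_on_ball_with phi Dphi D2phi x0 r
       \<and> (\<forall>y\<in>ball x0 r. w y \<le> ereal (phi y)) \<and> w x0 = ereal (phi x0)}"

definition Qtilde_subharmonic_at :: "(real^'n) set \<Rightarrow> (real^'n \<Rightarrow> ereal) \<Rightarrow> real^'n \<Rightarrow> bool" where
  "Qtilde_subharmonic_at \<Omega> w x0 \<longleftrightarrow> upper_jet \<Omega> w x0 \<subseteq> Qtilde"

definition subaffine_at :: "(real^'n) set \<Rightarrow> (real^'n \<Rightarrow> ereal) \<Rightarrow> real^'n \<Rightarrow> bool" where
  "subaffine_at \<Omega> w x0 \<longleftrightarrow> \<not> (\<exists>\<epsilon>>0. \<exists>\<rho>>0. \<exists>b c.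
       w x0 = ereal (b \<bullet> x0 + c) \<and>
       (\<forall>x\<in>ball x0 \<rho> \<inter> \<Omega>. w x \<le> ereal (b \<bullet> x + c - \<epsilon> * (norm (x - x0))\<^sup>2)))"

end

theory Submission
  imports Defs
begin

(* If w(x0) > 0 and w is not subaffine at x0, the paraboloid b.x + c - eps |x - x0|^2 touches w
   from above at x0, so (w(x0), -2 eps I) is an upper jet outside Q~. Conversely, let (r, A) be an
   upper jet with r > 0 and lambda_N(A) < 0, realised by a test function phi. Its second-order
   Taylor expansion at x0, together with h.Ah <= lambda_N(A) |h|^2, puts the paraboloid with
   opening lambda_N(A)/4 above phi, hence above w, near x0: w is not subaffine there. Finally every
   jet Hessian is symmetric, because a pointwise second derivative is symmetric (compare the
   two first-order expansions of a symmetric second difference). *)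

section \<open>Symmetric matrices\<close>

lemma symmetric_matrix_inner_commute:
  fixes A :: "real^'n^'n"
  assumes "transpose A = A"
  shows "x \<bullet> (A *v y) = (A *v x) \<bullet> y"
  by (metis assms dot_lmul_matrix transpose_matrix_vector)

lemma mat_mult_vector: "mat c *v (x::real^'n) = c *\<^sub>R x"
  by (simp add: vec_eq_iff matrix_vector_mult_def mat_def if_distrib if_distribR cong del: if_weak_cong)

lemma linear_coeff_zero_if_quadratic_nonneg:
  fixes a c :: real
  assumes "\<And>t. 0 \<le> t * a + t\<^sup>2 * c"
  shows "a = 0"
proof (rule ccontr)
  assume "a \<noteq> 0"
  define k where "k = \<bar>c\<bar> + 1"
  define t where "t = - a / (2 * k)"
  have k: "k > 0" by (simp add: k_def)
  have "t\<^sup>2 * c \<le> t\<^sup>2 * k" by (rule mult_left_mono) (auto simp: k_def)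
  then have "t * a + t\<^sup>2 * c \<le> t * a + t\<^sup>2 * k" by simp
  also have "\<dots> = - a\<^sup>2 / (4 * k)"
    using k by (simp add: t_def power2_eq_square field_simps)
  also have "\<dots> < 0" using \<open>a \<noteq> 0\<close> k by simp
  finally show False using assms[of t] by simp
qed

lemma finite_eigenvalues_symmetric:
  fixes A :: "real^'n^'n"
  assumes sym: "transpose A = A"
  shows "finite {c. \<exists>v. v \<noteq> 0 \<and> A *v v = c *\<^sub>R v}"
proof -
  define E where "E = {c. \<exists>v. v \<noteq> 0 \<and> A *v v = c *\<^sub>R v}"
  define ev where "ev c = (SOME v. v \<noteq> 0 \<and> A *v v = c *\<^sub>R v)" for c
  have ev: "ev c \<noteq> 0" "A *v ev c = c *\<^sub>R ev c" if "c \<in> E" for c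
    using someI_ex[of "\<lambda>v. v \<noteq> 0 \<and> A *v v = c *\<^sub>R v"] that by (simp_all add: E_def ev_def)
  have inj: "inj_on ev E"
  proof (rule inj_onI)
    fix c1 c2 assume c: "c1 \<in> E" "c2 \<in> E" "ev c1 = ev c2"
    have "c1 *\<^sub>R ev c1 = A *v ev c2" using ev(2)[OF c(1)] c(3) by simp
    also have "\<dots> = c2 *\<^sub>R ev c1" using ev(2)[OF c(2)] c(3) by simp
    finally show "c1 = c2" using ev(1)[OF c(1)] by simp
  qed
  have "pairwise orthogonal (ev ` E)"
  proof (rule pairwiseI)
    fix x y assume "x \<in> ev ` E" "y \<in> ev ` E" "x \<noteq> y"
    then obtain c1 c2 where c: "c1 \<in> E" "c2 \<in> E" and xy: "x = ev c1" "y = ev c2" "c1 \<noteq> c2"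
      by blast
    have "c1 * (ev c1 \<bullet> ev c2) = (A *v ev c1) \<bullet> ev c2" using ev(2)[OF c(1)] by simp
    also have "\<dots> = ev c1 \<bullet> (A *v ev c2)" using symmetric_matrix_inner_commute[OF sym] by simp
    also have "\<dots> = c2 * (ev c1 \<bullet> ev c2)" using ev(2)[OF c(2)] by simp
    finally have "(c1 - c2) * (ev c1 \<bullet> ev c2) = 0" by (simp add: algebra_simps)
    then show "orthogonal x y" using xy by (simp add: orthogonal_def)
  qed
  moreover have "0 \<notin> ev ` E" using ev(1) by auto
  ultimately have "independent (ev ` E)" by (rule pairwise_orthogonal_independent)
  then have "finite (ev ` E)" by (rule eucl.finiteI_independent)
  then show ?thesis using inj unfolding E_def by (rule finite_imageD)
qed

(* The maximiser v of the quadratic form on the unit sphere is an eigenvector: perturbing v in the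
   direction y = \<mu> v - A v gives a nonnegative quadratic in t with linear coefficient 2 |y|^2. *)
lemma symmetric_matrix_quadratic_form_max_eigenvalue:
  fixes A :: "real^'n^'n"
  assumes sym: "transpose A = A"
  obtains \<mu> v where "v \<noteq> 0" "A *v v = \<mu> *\<^sub>R v" "\<And>h. h \<bullet> (A *v h) \<le> \<mu> * (norm h)\<^sup>2"
proof -
  have "sphere (0::real^'n) 1 \<noteq> {}" by (metis mem_sphere_0 norm_axis_1 empty_iff)
  moreover have "continuous_on (sphere 0 1) (\<lambda>h. h \<bullet> (A *v h))"
    by (intro continuous_intros matrix_vector_mult_linear_continuous_on)
  ultimately obtain v where "v \<in> sphere 0 1" "\<forall>k\<in>sphere 0 1. k \<bullet> (A *v k) \<le> v \<bullet> (A *v v)"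
    using continuous_attains_sup[OF compact_sphere] by blast
  then have v: "norm v = 1" and vmax: "\<And>k. norm k = 1 \<Longrightarrow> k \<bullet> (A *v k) \<le> v \<bullet> (A *v v)"
    by auto
  define \<mu> where "\<mu> = v \<bullet> (A *v v)"
  have bound: "h \<bullet> (A *v h) \<le> \<mu> * (norm h)\<^sup>2" for h
  proof (cases "h = 0")
    case False
    define k where "k = (1 / norm h) *\<^sub>R h"
    have "k \<bullet> (A *v k) \<le> \<mu>" using vmax[of k] False by (simp add: k_def \<mu>_def)
    moreover have "k \<bullet> (A *v k) = h \<bullet> (A *v h) / (norm h)\<^sup>2"
      by (simp add: k_def matrix_vector_mult_scaleR power2_eq_square)
    ultimately show ?thesis using False by (simp add: field_simps)
  qed simp
  define y where "y = \<mu> *\<^sub>R v - A *v v"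
  have "0 \<le> t * (2 * (y \<bullet> y)) + t\<^sup>2 * (\<mu> * (norm y)\<^sup>2 - y \<bullet> (A *v y))" for t
  proof -
    have "0 \<le> \<mu> * (norm (v + t *\<^sub>R y))\<^sup>2 - (v + t *\<^sub>R y) \<bullet> (A *v (v + t *\<^sub>R y))"
      using bound[of "v + t *\<^sub>R y"] by simp
    also have "\<dots> = t * (2 * (y \<bullet> y)) + t\<^sup>2 * (\<mu> * (norm y)\<^sup>2 - y \<bullet> (A *v y))"
    proof -
      have "v \<bullet> (A *v y) = y \<bullet> (A *v v)"
        using symmetric_matrix_inner_commute[OF sym, of v y] by (simp add: inner_commute)
      moreover have "v \<bullet> v = 1" using v by (simp add: dot_square_norm)
      ultimately show ?thesis
        unfolding power2_norm_eq_inner y_def \<mu>_def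
        by (simp add: algebra_simps power2_eq_square inner_commute)
    qed
    finally show ?thesis .
  qed
  then have "y \<bullet> y = 0" using linear_coeff_zero_if_quadratic_nonneg by fastforce
  then have "A *v v = \<mu> *\<^sub>R v" by (simp add: y_def)
  moreover have "v \<noteq> 0" using v by auto
  ultimately show ?thesis using that bound by simp
qed

lemma quadratic_form_le_largest_eigenvalue:
  fixes A :: "real^'n^'n"
  assumes "symmetric_matrix A"
  shows "h \<bullet> (A *v h) \<le> largest_eigenvalue A * (norm h)\<^sup>2"
proof -
  have sym: "transpose A = A" using assms by (simp add: symmetric_matrix_def)
  obtain \<mu> v where "v \<noteq> 0" "A *v v = \<mu> *\<^sub>R v" and bound: "\<And>h. h \<bullet> (A *v h) \<le> \<mu> * (norm h)\<^sup>2"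
    by (rule symmetric_matrix_quadratic_form_max_eigenvalue[OF sym]) auto
  then have "\<mu> \<le> largest_eigenvalue A"
    unfolding largest_eigenvalue_def using finite_eigenvalues_symmetric[OF sym] by (intro Max_ge) auto
  then show ?thesis using bound[of h] by (meson order_trans mult_right_mono zero_le_power2)
qed

lemma largest_eigenvalue_mat: "largest_eigenvalue (mat c :: real^'n^'n) = c"
proof -
  have "{c'. \<exists>v::real^'n. v \<noteq> 0 \<and> mat c *v v = c' *\<^sub>R v} = {c}"
  proof (intro equalityI subsetI)
    fix c' assume "c' \<in> {c'. \<exists>v::real^'n. v \<noteq> 0 \<and> mat c *v v = c' *\<^sub>R v}"
    then show "c' \<in> {c}" by (auto simp: mat_mult_vector)
  next
    fix c' assume "c' \<in> {c}"
    then show "c' \<in> {c'. \<exists>v::real^'n. v \<noteq> 0 \<and> mat c *v v = c' *\<^sub>R v}"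
      by (auto simp: mat_mult_vector intro!: exI[of _ "axis undefined 1"])
  qed
  then show ?thesis by (simp add: largest_eigenvalue_def)
qed

section \<open>Second-order expansions\<close>

lemma mvt_segment:
  fixes f :: "'a::real_normed_vector \<Rightarrow> real"
  assumes "\<And>s. 0 \<le> s \<Longrightarrow> s \<le> 1 \<Longrightarrow> (f has_derivative f' (a + s *\<^sub>R h)) (at (a + s *\<^sub>R h))"
  obtains z where "0 < z" "z < 1" "f (a + h) - f a = f' (a + z *\<^sub>R h) h"
proof -
  have "((\<lambda>s. f (a + s *\<^sub>R h)) has_derivative (\<lambda>d. f' (a + s *\<^sub>R h) (d *\<^sub>R h))) (at s within {0..1})"
    if "0 \<le> s" "s \<le> 1" for s
  proof -
    have "((\<lambda>s. a + s *\<^sub>R h) has_derivative (\<lambda>d. d *\<^sub>R h)) (at s within {0..1})"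
      by (auto intro!: derivative_eq_intros)
    from has_derivative_compose[OF this assms[OF that]] show ?thesis .
  qed
  from mvt_simple[OF zero_less_one this] obtain z where "z \<in> {0<..<1}"
    and "f (a + 1 *\<^sub>R h) - f (a + 0 *\<^sub>R h) = f' (a + z *\<^sub>R h) ((1 - 0) *\<^sub>R h)"
    by blast
  then show ?thesis by (intro that[of z]) auto
qed

lemma has_derivative_remainder_bound:
  fixes f :: "'a::real_normed_vector \<Rightarrow> 'b::real_normed_vector"
  assumes "(f has_derivative f') (at x0)" and "\<eta> > 0"
  obtains d where "d > 0"
    and "\<And>y s. norm (y - x0) \<le> s \<Longrightarrow> s < d \<Longrightarrow> norm (f y - f x0 - f' (y - x0)) \<le> \<eta> * s"
proof -
  obtain d where "d > 0" and d: "\<And>y. norm (y - x0) < d \<Longrightarrow>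
      norm (f y - f x0 - f' (y - x0)) \<le> \<eta> * norm (y - x0)"
    using assms by (auto simp: has_derivative_at_alt)
  show ?thesis
  proof (rule that[OF \<open>d > 0\<close>])
    fix y s assume "norm (y - x0) \<le> s" "s < d"
    then have "norm (f y - f x0 - f' (y - x0)) \<le> \<eta> * norm (y - x0)" by (intro d) simp
    also have "\<dots> \<le> \<eta> * s" using \<open>norm (y - x0) \<le> s\<close> \<open>\<eta> > 0\<close> by simp
    finally show "norm (f y - f x0 - f' (y - x0)) \<le> \<eta> * s" .
  qed
qed

lemma second_order_taylor_bound:
  fixes phi :: "real^'n \<Rightarrow> real" and Dphi :: "real^'n \<Rightarrow> real^'n" and A :: "real^'n^'n"
  assumes "r > 0" and grad: "\<forall>x\<in>ball x0 r. (phi has_derivative (\<lambda>h. Dphi x \<bullet> h)) (at x)"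
    and hess: "(Dphi has_derivative (\<lambda>h. A *v h)) (at x0)" and "\<eta> > 0"
  obtains \<delta> where "\<delta> > 0" and "\<And>h. norm h < \<delta> \<Longrightarrow>
     \<bar>phi (x0 + h) - phi x0 - Dphi x0 \<bullet> h - h \<bullet> (A *v h) / 2\<bar> \<le> \<eta> * (norm h)\<^sup>2"
proof -
  obtain d where "d > 0" and d: "\<And>y s. norm (y - x0) \<le> s \<Longrightarrow> s < d \<Longrightarrow>
      norm (Dphi y - Dphi x0 - A *v (y - x0)) \<le> \<eta> * s"
    by (rule has_derivative_remainder_bound[OF hess \<open>\<eta> > 0\<close>]) auto
  have "\<bar>phi (x0 + h) - phi x0 - Dphi x0 \<bullet> h - h \<bullet> (A *v h) / 2\<bar> \<le> \<eta> * (norm h)\<^sup>2"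
    if h: "norm h < min d r" for h
  proof -
    define \<psi> where "\<psi> y = phi y - Dphi x0 \<bullet> (y - x0) - (y - x0) \<bullet> (A *v (y - x0)) / 2" for y
    define \<psi>' where "\<psi>' y k = Dphi y \<bullet> k - Dphi x0 \<bullet> k - (k \<bullet> (A *v (y - x0)) + (y - x0) \<bullet> (A *v k)) / 2"
      for y k
    have "(\<psi> has_derivative \<psi>' (x0 + s *\<^sub>R h)) (at (x0 + s *\<^sub>R h))" if "0 \<le> s" "s \<le> 1" for s
    proof -
      have "s * norm h \<le> norm h" using that by (simp add: mult_left_le_one_le)
      then have "norm (s *\<^sub>R h) < r" using that h by simp
      then have "(phi has_derivative (\<lambda>k. Dphi (x0 + s *\<^sub>R h) \<bullet> k)) (at (x0 + s *\<^sub>R h))"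
        using grad by (simp add: dist_norm)
      then show ?thesis unfolding \<psi>_def \<psi>'_def
        by (auto intro!: derivative_eq_intros bounded_linear.has_derivative[OF matrix_vector_mul_bounded_linear])
    qed
    then obtain z where z: "0 < z" "z < 1" and mvt: "\<psi> (x0 + h) - \<psi> x0 = \<psi>' (x0 + z *\<^sub>R h) h"
      by (rule mvt_segment)
    have "phi (x0 + h) - phi x0 - Dphi x0 \<bullet> h - h \<bullet> (A *v h) / 2
        = (Dphi (x0 + z *\<^sub>R h) - Dphi x0 - A *v (z *\<^sub>R h)) \<bullet> h"
      using mvt by (simp add: \<psi>_def \<psi>'_def algebra_simps inner_commute)
    also have "\<bar>\<dots>\<bar> \<le> norm (Dphi (x0 + z *\<^sub>R h) - Dphi x0 - A *v (z *\<^sub>R h)) * norm h"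
      by (rule Cauchy_Schwarz_ineq2)
    also have "\<dots> \<le> \<eta> * norm h * norm h"
      using d[of "x0 + z *\<^sub>R h" "norm h"] z h by (intro mult_right_mono) (simp_all add: mult_left_le_one_le)
    finally show ?thesis by (simp add: power2_eq_square)
  qed
  then show ?thesis using that \<open>d > 0\<close> \<open>r > 0\<close> by (meson min_less_iff_conj)
qed

lemma second_difference_mvt:
  fixes phi :: "'a::real_inner \<Rightarrow> real" and Dphi :: "'a \<Rightarrow> 'a"
  assumes grad: "\<forall>x\<in>ball x0 r. (phi has_derivative (\<lambda>h. Dphi x \<bullet> h)) (at x)"
    and "norm u + norm v < r"
  obtains z where "0 < z" "z < 1"
    and "phi (x0 + u + v) - phi (x0 + u) - phi (x0 + v) + phi x0
      = (Dphi (x0 + z *\<^sub>R v + u) - Dphi (x0 + z *\<^sub>R v)) \<bullet> v"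
proof -
  define \<psi> where "\<psi> y = phi (y + u) - phi y" for y
  have "(\<psi> has_derivative (\<lambda>k. (Dphi (x0 + s *\<^sub>R v + u) - Dphi (x0 + s *\<^sub>R v)) \<bullet> k)) (at (x0 + s *\<^sub>R v))"
    if "0 \<le> s" "s \<le> 1" for s
  proof -
    have sv: "norm (s *\<^sub>R v) \<le> norm v" using that by (simp add: mult_left_le_one_le)
    then have "norm (s *\<^sub>R v + u) < r" "norm (s *\<^sub>R v) < r"
      using norm_triangle_ineq[of "s *\<^sub>R v" u] norm_ge_zero[of u] assms(2) by linarith+
    moreover have "x0 + w \<in> ball x0 r" if "norm w < r" for w using that by (simp add: dist_norm)
    ultimately have "x0 + s *\<^sub>R v + u \<in> ball x0 r" "x0 + s *\<^sub>R v \<in> ball x0 r"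
      by (simp_all add: add.assoc)
    then have "(phi has_derivative (\<lambda>k. Dphi (x0 + s *\<^sub>R v + u) \<bullet> k)) (at (x0 + s *\<^sub>R v + u))"
      and "(phi has_derivative (\<lambda>k. Dphi (x0 + s *\<^sub>R v) \<bullet> k)) (at (x0 + s *\<^sub>R v))"
      using grad by auto
    moreover have "((\<lambda>y. y + u) has_derivative (\<lambda>k. k)) (at (x0 + s *\<^sub>R v))"
      by (auto intro!: derivative_eq_intros)
    ultimately show ?thesis unfolding \<psi>_def inner_diff_left
      by (intro has_derivative_diff) (auto dest: has_derivative_compose)
  qed
  then obtain z where "0 < z" "z < 1"
    and "\<psi> (x0 + v) - \<psi> x0 = (Dphi (x0 + z *\<^sub>R v + u) - Dphi (x0 + z *\<^sub>R v)) \<bullet> v"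
    by (rule mvt_segment)
  moreover have "\<psi> (x0 + v) - \<psi> x0 = phi (x0 + u + v) - phi (x0 + u) - phi (x0 + v) + phi x0"
    by (simp add: \<psi>_def add_ac)
  ultimately show ?thesis using that by simp
qed

lemma second_difference_bound:
  fixes phi :: "real^'n \<Rightarrow> real" and Dphi :: "real^'n \<Rightarrow> real^'n" and A :: "real^'n^'n"
  assumes "r > 0" and grad: "\<forall>x\<in>ball x0 r. (phi has_derivative (\<lambda>h. Dphi x \<bullet> h)) (at x)"
    and hess: "(Dphi has_derivative (\<lambda>h. A *v h)) (at x0)" and "\<eta> > 0"
  obtains \<delta> where "\<delta> > 0" and "\<And>t u v. 0 < t \<Longrightarrow> t < \<delta> \<Longrightarrow> norm u \<le> 1 \<Longrightarrow> norm v \<le> 1 \<Longrightarrow>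
     \<bar>phi (x0 + t *\<^sub>R u + t *\<^sub>R v) - phi (x0 + t *\<^sub>R u) - phi (x0 + t *\<^sub>R v) + phi x0
       - t\<^sup>2 * ((A *v u) \<bullet> v)\<bar> \<le> 3 * \<eta> * t\<^sup>2"
proof -
  obtain d where "d > 0" and d: "\<And>y s. norm (y - x0) \<le> s \<Longrightarrow> s < d \<Longrightarrow>
      norm (Dphi y - Dphi x0 - A *v (y - x0)) \<le> \<eta> * s"
    by (rule has_derivative_remainder_bound[OF hess \<open>\<eta> > 0\<close>]) auto
  have "\<bar>phi (x0 + t *\<^sub>R u + t *\<^sub>R v) - phi (x0 + t *\<^sub>R u) - phi (x0 + t *\<^sub>R v) + phi x0
       - t\<^sup>2 * ((A *v u) \<bullet> v)\<bar> \<le> 3 * \<eta> * t\<^sup>2"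
    if t: "0 < t" "t < min d r / 2" and u: "norm u \<le> 1" and v: "norm v \<le> 1" for t u v
  proof -
    have tu: "norm (t *\<^sub>R u) \<le> t" and tv: "norm (t *\<^sub>R v) \<le> t"
      using t u v by (simp_all add: mult_left_le)
    moreover have "t < r / 2" using t by simp
    ultimately have "norm (t *\<^sub>R u) + norm (t *\<^sub>R v) < r" by linarith
    then obtain z where z: "0 < z" "z < 1"
      and mvt: "phi (x0 + t *\<^sub>R u + t *\<^sub>R v) - phi (x0 + t *\<^sub>R u) - phi (x0 + t *\<^sub>R v) + phi x0
        = (Dphi (x0 + z *\<^sub>R t *\<^sub>R v + t *\<^sub>R u) - Dphi (x0 + z *\<^sub>R t *\<^sub>R v)) \<bullet> (t *\<^sub>R v)"
      by (rule second_difference_mvt[OF grad])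
    define y where "y = x0 + z *\<^sub>R t *\<^sub>R v"
    have ny: "norm (y - x0) \<le> t" and nyu: "norm (y + t *\<^sub>R u - x0) \<le> 2 * t"
    proof -
      have "norm (y - x0) = z * norm (t *\<^sub>R v)" using z by (simp add: y_def abs_mult)
      also have "\<dots> \<le> norm (t *\<^sub>R v)" using z by (intro mult_left_le_one_le) simp_all
      finally show "norm (y - x0) \<le> t" using tv by simp
      then show "norm (y + t *\<^sub>R u - x0) \<le> 2 * t"
        using norm_triangle_ineq[of "y - x0" "t *\<^sub>R u"] tu by (simp add: algebra_simps)
    qed
    define E1 where "E1 = Dphi (y + t *\<^sub>R u) - Dphi x0 - A *v (y + t *\<^sub>R u - x0)"
    define E2 where "E2 = Dphi y - Dphi x0 - A *v (y - x0)"
    have "norm E1 \<le> \<eta> * (2 * t)" unfolding E1_def using nyu t by (intro d) auto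
    moreover have "norm E2 \<le> \<eta> * t" unfolding E2_def using ny t by (intro d) auto
    ultimately have E: "norm (E1 - E2) \<le> 3 * \<eta> * t"
      using norm_triangle_ineq4[of E1 E2] by simp
    have "phi (x0 + t *\<^sub>R u + t *\<^sub>R v) - phi (x0 + t *\<^sub>R u) - phi (x0 + t *\<^sub>R v) + phi x0
       - t\<^sup>2 * ((A *v u) \<bullet> v) = (E1 - E2) \<bullet> (t *\<^sub>R v)"
      using mvt[folded y_def] unfolding E1_def E2_def
      by (simp add: algebra_simps power2_eq_square)
    moreover have "\<bar>(E1 - E2) \<bullet> (t *\<^sub>R v)\<bar> \<le> norm (E1 - E2) * norm (t *\<^sub>R v)"
      by (rule Cauchy_Schwarz_ineq2)
    moreover have "norm (E1 - E2) * norm (t *\<^sub>R v) \<le> 3 * \<eta> * t * t"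
      using E tv t \<open>\<eta> > 0\<close> by (intro mult_mono) simp_all
    ultimately show ?thesis by (simp add: power2_eq_square)
  qed
  then show ?thesis using \<open>d > 0\<close> \<open>r > 0\<close> by (intro that[of "min d r / 2"]) auto
qed

lemma hessian_symmetric:
  fixes phi :: "real^'n \<Rightarrow> real" and Dphi :: "real^'n \<Rightarrow> real^'n" and A :: "real^'n^'n"
  assumes "r > 0" and "\<forall>x\<in>ball x0 r. (phi has_derivative (\<lambda>h. Dphi x \<bullet> h)) (at x)"
    and "(Dphi has_derivative (\<lambda>h. A *v h)) (at x0)"
  shows "transpose A = A"
proof -
  have "A$i$j = A$j$i" for i j
  proof -
    define u v where "u = (axis j 1 :: real^'n)" and "v = (axis i 1 :: real^'n)"
    have entries: "(A *v u) \<bullet> v = A$i$j" "(A *v v) \<bullet> u = A$j$i"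
      by (simp_all add: u_def v_def matrix_vector_mult_basis inner_axis column_def)
    have small: "\<bar>A$i$j - A$j$i\<bar> \<le> 6 * \<eta>" if "\<eta> > 0" for \<eta>
    proof -
      obtain \<delta> where "\<delta> > 0" and bound: "\<And>t u v. 0 < t \<Longrightarrow> t < \<delta> \<Longrightarrow> norm u \<le> 1 \<Longrightarrow> norm v \<le> 1 \<Longrightarrow>
         \<bar>phi (x0 + t *\<^sub>R u + t *\<^sub>R v) - phi (x0 + t *\<^sub>R u) - phi (x0 + t *\<^sub>R v) + phi x0
           - t\<^sup>2 * ((A *v u) \<bullet> v)\<bar> \<le> 3 * \<eta> * t\<^sup>2"
        using second_difference_bound[OF assms \<open>\<eta> > 0\<close>] by blast
      define t where "t = \<delta> / 2"
      have t: "0 < t" "t < \<delta>" using \<open>\<delta> > 0\<close> by (simp_all add: t_def)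
      define D where "D = phi (x0 + t *\<^sub>R u + t *\<^sub>R v) - phi (x0 + t *\<^sub>R u) - phi (x0 + t *\<^sub>R v) + phi x0"
      have nu: "norm u \<le> 1" and nv: "norm v \<le> 1" by (simp_all add: u_def v_def)
      have Dij: "\<bar>D - t\<^sup>2 * A$i$j\<bar> \<le> 3 * \<eta> * t\<^sup>2"
        using bound[OF t nu nv] unfolding D_def entries .
      (* D is symmetric in u and v, while its two expansions read off A$i$j and A$j$i. *)
      have Dji: "\<bar>D - t\<^sup>2 * A$j$i\<bar> \<le> 3 * \<eta> * t\<^sup>2"
        using bound[OF t nv nu] unfolding D_def entries add.assoc add.commute[of "t *\<^sub>R v"] by linarith
      have "t\<^sup>2 * \<bar>A$i$j - A$j$i\<bar> = \<bar>(D - t\<^sup>2 * A$j$i) - (D - t\<^sup>2 * A$i$j)\<bar>"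
        by (simp add: abs_mult flip: right_diff_distrib)
      also have "\<dots> \<le> 3 * \<eta> * t\<^sup>2 + 3 * \<eta> * t\<^sup>2" using Dij Dji by linarith
      also have "\<dots> = t\<^sup>2 * (6 * \<eta>)" by simp
      finally show ?thesis using t by simp
    qed
    show ?thesis
    proof (rule ccontr)
      assume "A$i$j \<noteq> A$j$i"
      then show False using small[of "\<bar>A$i$j - A$j$i\<bar> / 12"] by simp
    qed
  qed
  then show ?thesis by (simp add: vec_eq_iff transpose_def)
qed

section \<open>Upper jets\<close>

lemma upper_jet_hessian_symmetric:
  assumes "(p, A) \<in> upper_jet \<Omega> w x0"
  shows "symmetric_matrix A"
  using assms hessian_symmetric unfolding upper_jet_def C2_on_ball_with_def symmetric_matrix_def
  by fastforce

lemma upper_jet_touches: "(p, A) \<in> upper_jet \<Omega> w x0 \<Longrightarrow> w x0 = ereal p"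
  by (auto simp: upper_jet_def)

lemma upper_jet_second_order_bound:
  assumes "(p, A) \<in> upper_jet \<Omega> w x0" and "\<eta> > 0"
  obtains b \<delta> where "\<delta> > 0"
    and "\<And>x. x \<in> ball x0 \<delta> \<Longrightarrow>
      w x \<le> ereal (p + b \<bullet> (x - x0) + (x - x0) \<bullet> (A *v (x - x0)) / 2 + \<eta> * (norm (x - x0))\<^sup>2)"
proof -
  obtain phi Dphi D2phi r where p: "p = phi x0" and A: "A = D2phi x0" and "r > 0"
    and C2: "C2_on_ball_with phi Dphi D2phi x0 r"
    and above: "\<forall>y\<in>ball x0 r. w y \<le> ereal (phi y)"
    using assms(1) unfolding upper_jet_def by blast
  have grad: "\<forall>x\<in>ball x0 r. (phi has_derivative (\<lambda>h. Dphi x \<bullet> h)) (at x)"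
    and hess: "(Dphi has_derivative (\<lambda>h. A *v h)) (at x0)"
    using C2 \<open>r > 0\<close> by (simp_all add: C2_on_ball_with_def A)
  obtain \<delta> where "\<delta> > 0" and taylor: "\<And>h. norm h < \<delta> \<Longrightarrow>
      \<bar>phi (x0 + h) - phi x0 - Dphi x0 \<bullet> h - h \<bullet> (A *v h) / 2\<bar> \<le> \<eta> * (norm h)\<^sup>2"
    using second_order_taylor_bound[OF \<open>r > 0\<close> grad hess \<open>\<eta> > 0\<close>] by blast
  show ?thesis
  proof (rule that[of "min \<delta> r" "Dphi x0"])
    fix x assume x: "x \<in> ball x0 (min \<delta> r)"
    then have "phi x \<le> p + Dphi x0 \<bullet> (x - x0) + (x - x0) \<bullet> (A *v (x - x0)) / 2 + \<eta> * (norm (x - x0))\<^sup>2"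
      using taylor[of "x - x0"] by (simp add: p dist_norm norm_minus_commute abs_le_iff)
    moreover have "w x \<le> ereal (phi x)" using above x by auto
    ultimately show "w x \<le> ereal (p + Dphi x0 \<bullet> (x - x0) + (x - x0) \<bullet> (A *v (x - x0)) / 2 + \<eta> * (norm (x - x0))\<^sup>2)"
      using order_trans ereal_less_eq(3) by blast
  qed (use \<open>\<delta> > 0\<close> \<open>r > 0\<close> in auto)
qed

lemma not_subaffine_if_jet_negative_definite:
  assumes "(p, A) \<in> upper_jet \<Omega> w x0" and "largest_eigenvalue A < 0"
  shows "\<not> subaffine_at \<Omega> w x0"
proof -
  define \<epsilon> where "\<epsilon> = - largest_eigenvalue A / 4"
  have "\<epsilon> > 0" using assms(2) by (simp add: \<epsilon>_def)
  then obtain b \<delta> where "\<delta> > 0"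
    and bound: "\<And>x. x \<in> ball x0 \<delta> \<Longrightarrow>
      w x \<le> ereal (p + b \<bullet> (x - x0) + (x - x0) \<bullet> (A *v (x - x0)) / 2 + \<epsilon> * (norm (x - x0))\<^sup>2)"
    using upper_jet_second_order_bound[OF assms(1)] by metis
  have below: "w x \<le> ereal (b \<bullet> x + (p - b \<bullet> x0) - \<epsilon> * (norm (x - x0))\<^sup>2)" if "x \<in> ball x0 \<delta>" for x
  proof -
    have "(x - x0) \<bullet> (A *v (x - x0)) \<le> - 4 * \<epsilon> * (norm (x - x0))\<^sup>2"
      using quadratic_form_le_largest_eigenvalue[OF upper_jet_hessian_symmetric[OF assms(1)]]
      by (simp add: \<epsilon>_def)
    then have "p + b \<bullet> (x - x0) + (x - x0) \<bullet> (A *v (x - x0)) / 2 + \<epsilon> * (norm (x - x0))\<^sup>2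
        \<le> b \<bullet> x + (p - b \<bullet> x0) - \<epsilon> * (norm (x - x0))\<^sup>2"
      by (simp add: inner_diff_right)
    then show ?thesis using bound[OF that] order_trans ereal_less_eq(3) by blast
  qed
  moreover have "w x0 = ereal (b \<bullet> x0 + (p - b \<bullet> x0))" using upper_jet_touches[OF assms(1)] by simp
  ultimately show ?thesis unfolding subaffine_at_def using \<open>\<epsilon> > 0\<close> \<open>\<delta> > 0\<close> by blast
qed

lemma C2_on_ball_with_paraboloid:
  fixes b x0 :: "real^'n"
  shows "C2_on_ball_with (\<lambda>x. b \<bullet> x + c - \<epsilon> * (norm (x - x0))\<^sup>2) (\<lambda>x. b - (2 * \<epsilon>) *\<^sub>R (x - x0))
     (\<lambda>_. mat (- 2 * \<epsilon>)) x0 r"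
proof -
  have "((\<lambda>x. b \<bullet> x + c - \<epsilon> * (norm (x - x0))\<^sup>2) has_derivative
      (\<lambda>h. (b - (2 * \<epsilon>) *\<^sub>R (x - x0)) \<bullet> h)) (at x)" for x :: "real^'n"
    unfolding power2_norm_eq_inner
    by (auto intro!: derivative_eq_intros simp: algebra_simps inner_commute)
  moreover have "((\<lambda>x. b - (2 * \<epsilon>) *\<^sub>R (x - x0)) has_derivative (\<lambda>h. mat (- 2 * \<epsilon>) *v h)) (at x)"
    for x :: "real^'n"
    by (auto intro!: derivative_eq_intros simp: mat_mult_vector)
  ultimately show ?thesis by (simp add: C2_on_ball_with_def)
qed

lemma paraboloid_in_upper_jet:
  assumes "open \<Omega>" and "x0 \<in> \<Omega>" and "\<rho> > 0"
    and touch: "w x0 = ereal (b \<bullet> x0 + c)"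
    and below: "\<forall>x\<in>ball x0 \<rho> \<inter> \<Omega>. w x \<le> ereal (b \<bullet> x + c - \<epsilon> * (norm (x - x0))\<^sup>2)"
  shows "(b \<bullet> x0 + c, mat (- 2 * \<epsilon>)) \<in> upper_jet \<Omega> w x0"
proof -
  obtain r where "r > 0" and "ball x0 r \<subseteq> \<Omega>"
    using assms(1,2) open_contains_ball by blast
  define \<phi> where "\<phi> x = b \<bullet> x + c - \<epsilon> * (norm (x - x0))\<^sup>2" for x
  have "min r \<rho> > 0" and "ball x0 (min r \<rho>) \<subseteq> \<Omega>"
    using \<open>r > 0\<close> \<open>\<rho> > 0\<close> \<open>ball x0 r \<subseteq> \<Omega>\<close> by auto
  moreover have "\<forall>y\<in>ball x0 (min r \<rho>). w y \<le> ereal (\<phi> y)"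
    using below \<open>ball x0 (min r \<rho>) \<subseteq> \<Omega>\<close> by (auto simp: \<phi>_def)
  moreover have "w x0 = ereal (\<phi> x0)" using touch by (simp add: \<phi>_def)
  ultimately have "(\<phi> x0, mat (- 2 * \<epsilon>)) \<in> upper_jet \<Omega> w x0"
    unfolding upper_jet_def mem_Collect_eq using C2_on_ball_with_paraboloid[of b c \<epsilon> x0, folded \<phi>_def]
    by (intro exI[of _ \<phi>] exI[of _ "\<lambda>x. b - (2 * \<epsilon>) *\<^sub>R (x - x0)"] exI[of _ "\<lambda>_. mat (- 2 * \<epsilon>)"]
        conjI exI[of _ "min r \<rho>"]) auto
  then show ?thesis by (simp add: \<phi>_def)
qed

lemma nonpos_or_subaffine_if_upper_jet_subset_Qtilde:
  fixes x0 :: "real^'n"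
  assumes "open \<Omega>" and "x0 \<in> \<Omega>" and jets: "upper_jet \<Omega> w x0 \<subseteq> Qtilde"
  shows "w x0 \<le> 0 \<or> subaffine_at \<Omega> w x0"
proof (rule ccontr)
  assume "\<not> (w x0 \<le> 0 \<or> subaffine_at \<Omega> w x0)"
  then have "w x0 > 0" and "\<not> subaffine_at \<Omega> w x0" by auto
  then obtain \<epsilon> \<rho> b c where "\<epsilon> > 0" and "\<rho> > 0" and touch: "w x0 = ereal (b \<bullet> x0 + c)"
    and below: "\<forall>x\<in>ball x0 \<rho> \<inter> \<Omega>. w x \<le> ereal (b \<bullet> x + c - \<epsilon> * (norm (x - x0))\<^sup>2)"
    unfolding subaffine_at_def by auto
  have "(b \<bullet> x0 + c, mat (- 2 * \<epsilon>) :: real^'n^'n) \<in> Qtilde"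
    using jets paraboloid_in_upper_jet[OF assms(1,2) \<open>\<rho> > 0\<close> touch below] by (rule subsetD)
  moreover have "b \<bullet> x0 + c > 0" using \<open>w x0 > 0\<close> touch by simp
  ultimately show False using \<open>\<epsilon> > 0\<close> by (simp add: Qtilde_def largest_eigenvalue_mat)
qed

lemma upper_jet_subset_Qtilde_if_nonpos_or_subaffine:
  assumes "w x0 \<le> 0 \<or> subaffine_at \<Omega> w x0"
  shows "upper_jet \<Omega> w x0 \<subseteq> Qtilde"
proof (rule subsetI)
  fix q assume "q \<in> upper_jet \<Omega> w x0"
  then obtain p A where jet: "(p, A) \<in> upper_jet \<Omega> w x0" and q: "q = (p, A)" by (cases q) auto
  have "p \<le> 0 \<or> largest_eigenvalue A \<ge> 0"
  proof (rule ccontr)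
    assume "\<not> (p \<le> 0 \<or> largest_eigenvalue A \<ge> 0)"
    then have "\<not> w x0 \<le> 0" and "\<not> subaffine_at \<Omega> w x0"
      using upper_jet_touches[OF jet] not_subaffine_if_jet_negative_definite[OF jet] by auto
    with assms show False by blast
  qed
  then show "q \<in> Qtilde"
    using upper_jet_hessian_symmetric[OF jet] by (simp add: Qtilde_def q)
qed

theorem lemma2p9:
  fixes \<Omega> :: "(real^'n) set" and w :: "real^'n \<Rightarrow> ereal" and x0 :: "real^'n"
  assumes "open \<Omega>"
    and "usc_on \<Omega> w" and "\<forall>x\<in>\<Omega>. w x \<noteq> \<infinity>"
    and "x0 \<in> \<Omega>"
  shows "Qtilde_subharmonic_at \<Omega> w x0 \<longleftrightarrow> (w x0 \<le> 0 \<or> subaffine_at \<Omega> w x0)"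
  unfolding Qtilde_subharmonic_at_def
  using nonpos_or_subaffine_if_upper_jet_subset_Qtilde[OF assms(1,4)]
    upper_jet_subset_Qtilde_if_nonpos_or_subaffine
  by blast

end
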